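(* Let $\Lambda_1,\Lambda_2\in\mathbb R^{d\times d}$ be symmetric positive definite with $\Lambda_1\succ\Lambda_2$, and let $\mu\in\mathbb R^d$. Then $$d_{\mathsf C}\big(\mathcal N(\mu,\Lambda_1),\mathcal N(\mu,\Lambda_2)\big)=d_{\mathsf{TV}}\big(\mathcal N(\mu,\Lambda_1),\mathcal N(\mu,\Lambda_2)\big).$$
   Context: $d_{\mathsf C}(P,Q)=\sup_{\mathcal C}|P(\mathcal C)-Q(\mathcal C)|$ with the supremum over all convex subsets $\mathcal C\subseteq\mathbb R^d$; $d_{\mathsf{TV}}$ is the total variation distance; $\succ$ is the strict Loewner order. *)

theory Defs
  imports "HOL-Analysis.Analysis" "HOL-Probability.Probability"
begin

definition pos_def_matrix :: "real^'n^'n \<Rightarrow> bool" where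
  "pos_def_matrix A \<longleftrightarrow> transpose A = A \<and> (\<forall>x. x \<noteq> 0 \<longrightarrow> x \<bullet> (A *v x) > 0)"

definition loewner_gt :: "real^'n^'n \<Rightarrow> real^'n^'n \<Rightarrow> bool" where
  "loewner_gt A B \<longleftrightarrow> pos_def_matrix (A - B)"

definition gaussian_density :: "real^'n \<Rightarrow> real^'n^'n \<Rightarrow> real^'n \<Rightarrow> real" where
  "gaussian_density mu L x =
     exp (- ((x - mu) \<bullet> (matrix_inv L *v (x - mu))) / 2)
       / sqrt ((2 * pi) ^ CARD('n) * det L)"

text \<open>The Gaussian measure, defined on the Lebesgue (completed) sigma-algebra, so that
  all convex sets (which are Lebesgue measurable) get their proper probability.\<close>
definition gaussian :: "real^'n \<Rightarrow> real^'n^'n \<Rightarrow> (real^'n) measure" where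
  "gaussian mu L = density lebesgue (\<lambda>x. ennreal (gaussian_density mu L x))"

definition convex_dist :: "'a::real_vector measure \<Rightarrow> 'a measure \<Rightarrow> real" where
  "convex_dist P Q = (SUP C \<in> {C. convex C}. \<bar>measure P C - measure Q C\<bar>)"

definition tv_dist :: "'a measure \<Rightarrow> 'a measure \<Rightarrow> real" where
  "tv_dist P Q = (SUP A \<in> sets P. \<bar>measure P A - measure Q A\<bar>)"

end

theory Submission
  imports Defs
begin

text \<open>Let \<open>g\<^sub>1, g\<^sub>2\<close> be the densities of \<open>N(\<mu>, \<Lambda>\<^sub>1)\<close> and \<open>N(\<mu>, \<Lambda>\<^sub>2)\<close>. Since both integrate
  to one, Scheffe's argument shows that the total variation distance is attained at the single
  set \<open>E = {g\<^sub>1 \<le> g\<^sub>2}\<close>. Taking logarithms, \<open>E\<close> is a sublevel set of the quadratic form of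
  \<open>\<Lambda>\<^sub>2\<inverse> - \<Lambda>\<^sub>1\<inverse>\<close>, and \<open>\<Lambda>\<^sub>1 \<succ> \<Lambda>\<^sub>2\<close> makes this matrix positive semidefinite, so \<open>E\<close> is a
  (possibly degenerate) ellipsoid and in particular convex. Hence the supremum over convex sets
  already reaches the supremum over all measurable sets. The normalisation of the Gaussian
  density is obtained by diagonalising \<open>\<Lambda>\<close> with an orthogonal matrix, which preserves
  Lebesgue measure.\<close>

section \<open>Symmetric and positive definite matrices\<close>

definition pos_semidef_matrix :: "real^'n^'n \<Rightarrow> bool" where
  "pos_semidef_matrix A \<longleftrightarrow> (\<forall>x. 0 \<le> x \<bullet> (A *v x))"

lemma pos_def_imp_pos_semidef_matrix: "pos_def_matrix A \<Longrightarrow> pos_semidef_matrix A"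
  unfolding pos_def_matrix_def pos_semidef_matrix_def
  by (metis inner_zero_left less_eq_real_def order_refl)

lemma inner_matrix_vector_mult_symmetric:
  fixes A :: "real^'n^'n"
  assumes "transpose A = A"
  shows "x \<bullet> (A *v y) = (A *v x) \<bullet> y"
  by (metis assms dot_lmul_matrix vector_transpose_matrix)

lemma eq_0_if_quadratic_nonpos:
  fixes a c :: real
  assumes "a \<ge> 0" and "\<And>t. 2 * t * a + t\<^sup>2 * c \<le> 0"
  shows "a = 0"
proof (rule ccontr)
  assume "a \<noteq> 0"
  with assms(1) have a: "a > 0" by simp
  define t where "t = a / (\<bar>c\<bar> + 1)"
  have t: "t > 0" using a by (simp add: t_def)
  have "t * \<bar>c\<bar> < a" using a by (simp add: t_def field_simps)
  moreover have "t * c \<ge> - (t * \<bar>c\<bar>)" using t by (simp add: abs_if)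
  moreover have "t * (2 * a + t * c) \<le> 0" using assms(2)[of t] by (simp add: power2_eq_square algebra_simps)
  then have "2 * a + t * c \<le> 0" using t by (simp add: mult_le_0_iff)
  ultimately show False using a by linarith
qed

text \<open>With \<open>l = v \<bullet> A v\<close> and \<open>w = A v - l v\<close>, maximality applied to \<open>v + t w\<close> gives
  \<open>2 t |w|\<^sup>2 + O(t\<^sup>2) \<le> 0\<close> for all \<open>t\<close>, hence \<open>w = 0\<close>.\<close>
lemma symmetric_quadratic_form_maximiser_eigenvector:
  fixes A :: "real^'n^'n"
  assumes sym: "transpose A = A" and S: "subspace S" and invariant: "\<And>x. x \<in> S \<Longrightarrow> A *v x \<in> S"
    and v: "v \<in> S" "norm v = 1"
    and max: "\<And>y. y \<in> S \<Longrightarrow> norm y = 1 \<Longrightarrow> y \<bullet> (A *v y) \<le> v \<bullet> (A *v v)"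
  shows "A *v v = (v \<bullet> (A *v v)) *\<^sub>R v"
proof -
  define f where "f y = y \<bullet> (A *v y)" for y
  define l where "l = f v"
  define w where "w = A *v v - l *\<^sub>R v"
  have wS: "w \<in> S" unfolding w_def using S invariant v by (simp add: subspace_diff subspace_scale)
  have vv: "v \<bullet> v = 1" using v by (simp add: norm_eq_1)
  have wv: "w \<bullet> v = 0" unfolding w_def l_def f_def
    by (simp add: inner_diff_left vv inner_commute[of "A *v v" v])
  have Av: "A *v v = w + l *\<^sub>R v" by (simp add: w_def)
  have le: "f y \<le> l * (y \<bullet> y)" if "y \<in> S" for y
  proof (cases "y = 0")
    case True then show ?thesis by (simp add: f_def)
  next
    case False
    have "f (y /\<^sub>R norm y) \<le> l" using max[of "y /\<^sub>R norm y"] that S False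
      by (simp add: subspace_scale l_def f_def)
    moreover have "f (c *\<^sub>R y) = c\<^sup>2 * f y" for c
      by (simp add: f_def matrix_vector_mult_scaleR power2_eq_square)
    ultimately have "f y / (norm y)\<^sup>2 \<le> l"
      by (simp add: power_inverse divide_inverse mult.commute)
    then show ?thesis using False by (simp add: divide_le_eq power2_norm_eq_inner mult.commute)
  qed
  have "w \<bullet> w = 0"
  proof (rule eq_0_if_quadratic_nonpos[where c = "w \<bullet> (A *v w) - l * (w \<bullet> w)"])
    fix t :: real
    have "v \<bullet> (A *v w) = w \<bullet> w + l * (w \<bullet> v)"
      using inner_matrix_vector_mult_symmetric[OF sym, of v w]
      by (simp add: Av inner_add_left inner_add_right inner_commute[of "A *v v"] inner_commute[of w v])
    moreover have "w \<bullet> (A *v v) = w \<bullet> w + l * (w \<bullet> v)"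
      by (simp add: Av inner_add_right)
    ultimately have "f (v + t *\<^sub>R w) = l + 2 * t * (w \<bullet> w) + t\<^sup>2 * (w \<bullet> (A *v w))"
      unfolding f_def using wv
      by (simp add: matrix_vector_right_distrib matrix_vector_mult_scaleR inner_add_left inner_add_right
          l_def f_def power2_eq_square algebra_simps)
    moreover have "(v + t *\<^sub>R w) \<bullet> (v + t *\<^sub>R w) = 1 + t\<^sup>2 * (w \<bullet> w)"
      using vv wv by (simp add: inner_add_left inner_add_right inner_commute power2_eq_square)
    moreover have "v + t *\<^sub>R w \<in> S" using S v wS by (simp add: subspace_add subspace_scale)
    ultimately show "2 * t * (w \<bullet> w) + t\<^sup>2 * (w \<bullet> (A *v w) - l * (w \<bullet> w)) \<le> 0"
      using le[of "v + t *\<^sub>R w"] by (simp add: algebra_simps)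
  qed simp
  with Av have "A *v v = l *\<^sub>R v" by simp
  then show ?thesis unfolding l_def f_def .
qed

lemma quadratic_form_attains_max_on_unit_sphere:
  fixes A :: "real^'n^'n"
  assumes S: "subspace S" and nontrivial: "\<not> S \<subseteq> {0}"
  obtains v where "v \<in> S" "norm v = 1" "\<And>y. y \<in> S \<Longrightarrow> norm y = 1 \<Longrightarrow> y \<bullet> (A *v y) \<le> v \<bullet> (A *v v)"
proof -
  obtain x where x: "x \<in> S" "x \<noteq> 0" using nontrivial by auto
  have "continuous_on UNIV (\<lambda>y. y \<bullet> (A *v y))"
    by (intro continuous_intros linear_continuous_on) (simp add: linear_linear[symmetric] matrix_vector_mul_linear)
  moreover have "compact (S \<inter> sphere 0 1)"
    using S by (intro closed_Int_compact closed_subspace compact_sphere)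
  moreover have "x /\<^sub>R norm x \<in> S \<inter> sphere 0 1" using x S by (simp add: subspace_scale)
  ultimately show ?thesis
    using that continuous_attains_sup[of "S \<inter> sphere 0 1"] continuous_on_subset by force
qed

lemma
  fixes S :: "'a::euclidean_space set"
  assumes S: "subspace S" and v: "v \<in> S" "norm v = 1"
  shows subspace_eq_span_insert_orthogonal: "S = span (insert v (S \<inter> {y. v \<bullet> y = 0}))"
    and dim_subspace_orthogonal_less: "dim (S \<inter> {y. v \<bullet> y = 0}) < dim S"
proof -
  define S' where "S' = S \<inter> {y. v \<bullet> y = 0}"
  have vv: "v \<bullet> v = 1" using v by (simp add: norm_eq_1)
  have "subspace S'" unfolding S'_def using S subspace_hyperplane[of v] by (rule subspace_inter)
  have S_eq: "S = span (insert v S')"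
  proof
    show "span (insert v S') \<subseteq> S"
      using v S by (intro span_minimal) (auto simp: S'_def)
    show "S \<subseteq> span (insert v S')"
    proof
      fix y assume y: "y \<in> S"
      have "y - (v \<bullet> y) *\<^sub>R v \<in> S'" using y v S vv
        by (simp add: S'_def subspace_diff subspace_scale inner_diff_right)
      then have "y - (v \<bullet> y) *\<^sub>R v + (v \<bullet> y) *\<^sub>R v \<in> span (insert v S')"
        by (intro span_add span_scale) (auto intro: span_base)
      then show "y \<in> span (insert v S')" by simp
    qed
  qed
  then show "S = span (insert v (S \<inter> {y. v \<bullet> y = 0}))" by (simp add: S'_def)
  have "v \<notin> span S'" using \<open>subspace S'\<close> vv by (simp add: span_eq_iff[THEN iffD2] S'_def)
  then have "dim S = dim S' + 1" using S_eq by (metis dim_insert dim_span)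
  then show "dim (S \<inter> {y. v \<bullet> y = 0}) < dim S" by (simp add: S'_def)
qed

lemma symmetric_invariant_subspace_orthonormal_eigenbasis:
  fixes A :: "real^'n^'n"
  assumes sym: "transpose A = A"
  shows "subspace S \<Longrightarrow> (\<And>x. x \<in> S \<Longrightarrow> A *v x \<in> S) \<Longrightarrow>
    \<exists>B\<subseteq>S. pairwise orthogonal B \<and> (\<forall>b\<in>B. norm b = 1 \<and> (\<exists>c. A *v b = c *\<^sub>R b)) \<and> S \<subseteq> span B"
proof (induction "dim S" arbitrary: S rule: less_induct)
  case less
  show ?case
  proof (cases "S \<subseteq> {0}")
    case True
    then show ?thesis by (intro exI[of _ "{}"]) auto
  next
    case False
    then obtain v where v: "v \<in> S" "norm v = 1"
      and max: "\<And>y. y \<in> S \<Longrightarrow> norm y = 1 \<Longrightarrow> y \<bullet> (A *v y) \<le> v \<bullet> (A *v v)"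
      using quadratic_form_attains_max_on_unit_sphere[OF less.prems(1)] by blast
    obtain c where eig: "A *v v = c *\<^sub>R v"
      using symmetric_quadratic_form_maximiser_eigenvector[OF sym less.prems v max] by blast
    define S' where "S' = S \<inter> {y. v \<bullet> y = 0}"
    have "subspace S'" unfolding S'_def
      using less.prems(1) subspace_hyperplane[of v] by (rule subspace_inter)
    moreover have "A *v y \<in> S'" if "y \<in> S'" for y
    proof -
      have "v \<bullet> (A *v y) = (A *v v) \<bullet> y" by (rule inner_matrix_vector_mult_symmetric[OF sym])
      then show ?thesis using that less.prems(2) by (simp add: S'_def eig)
    qed
    moreover have "dim S' < dim S"
      unfolding S'_def using less.prems(1) v by (rule dim_subspace_orthogonal_less)
    ultimately obtain B where B: "B \<subseteq> S'" "pairwise orthogonal B"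
      "\<forall>b\<in>B. norm b = 1 \<and> (\<exists>c. A *v b = c *\<^sub>R b)" "S' \<subseteq> span B"
      using less.hyps by blast
    show ?thesis
    proof (intro exI[of _ "insert v B"] conjI)
      show "insert v B \<subseteq> S" using B(1) v by (auto simp: S'_def)
      show "pairwise orthogonal (insert v B)"
        using B(1,2) by (auto simp: pairwise_insert S'_def orthogonal_def inner_commute)
      show "\<forall>b\<in>insert v B. norm b = 1 \<and> (\<exists>c. A *v b = c *\<^sub>R b)"
        using B(3) v eig by blast
      have "insert v S' \<subseteq> span (insert v B)"
        using B(4) span_mono[of B "insert v B"] by (auto intro: span_base)
      then show "S \<subseteq> span (insert v B)"
        using subspace_eq_span_insert_orthogonal[OF less.prems(1) v] span_minimal[OF _ subspace_span]
        unfolding S'_def by blast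
    qed
  qed
qed

lemma symmetric_matrix_orthogonal_eigenvectors:
  fixes A :: "real^'n^'n"
  assumes "transpose A = A"
  obtains Q :: "real^'n^'n" and lam :: "'n \<Rightarrow> real"
  where "orthogonal_matrix Q" and "\<And>j. A *v column j Q = lam j *\<^sub>R column j Q"
proof -
  obtain B where B: "pairwise orthogonal B" "\<forall>b\<in>B. norm b = 1 \<and> (\<exists>c. A *v b = c *\<^sub>R b)"
     "UNIV \<subseteq> span B"
    using symmetric_invariant_subspace_orthonormal_eigenbasis[OF assms, of UNIV] by auto
  have ind: "independent B"
    using B(1,2) by (intro pairwise_orthogonal_independent) auto
  have "card B = dim (UNIV :: (real^'n) set)"
    using ind B(3) by (intro basis_card_eq_dim) auto
  then obtain h where h: "bij_betw h (UNIV :: 'n set) B"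
    using finite_same_card_bij[OF finite_class.finite_UNIV finiteI_independent[OF ind]] by auto
  define Q :: "real^'n^'n" where "Q = (\<chi> i j. h j $ i)"
  have col: "column j Q = h j" for j by (simp add: column_def Q_def vec_eq_iff)
  have hB: "h j \<in> B" for j using h by (auto simp: bij_betw_def)
  have "orthogonal_matrix Q"
    unfolding orthogonal_matrix_orthonormal_columns col
    using B(1,2) hB h by (auto simp: pairwise_def bij_betw_def inj_on_def) metis
  moreover have "\<exists>c. A *v column j Q = c *\<^sub>R column j Q" for j
    using B(2) hB by (simp add: col)
  ultimately show ?thesis using that by metis
qed

lemma det_eq_prod_eigenvalues:
  fixes A Q :: "real^'n^'n"
  assumes Q: "orthogonal_matrix Q" and eig: "\<And>j. A *v column j Q = lam j *\<^sub>R column j Q"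
  shows "det A = (\<Prod>j\<in>UNIV. lam j)"
proof -
  define D :: "real^'n^'n" where "D = (\<chi> i j. if i = j then lam i else 0)"
  have "A ** Q = Q ** D"
    using eig by (auto simp: vec_eq_iff matrix_matrix_mult_def matrix_vector_mult_def column_def D_def
        if_distrib[of "\<lambda>z. _ * z"] mult.commute cong: if_cong)
  then have "det A * det Q = det Q * det D" by (metis det_mul)
  moreover have "det Q \<noteq> 0" using det_orthogonal_matrix[OF Q] by auto
  moreover have "det D = (\<Prod>j\<in>UNIV. lam j)" by (subst det_diagonal) (auto simp: D_def)
  ultimately show ?thesis by simp
qed

lemma invertible_matrix_inv:
  fixes A :: "real^'n^'n"
  assumes "invertible A"
  shows "A ** matrix_inv A = mat 1" and "matrix_inv A ** A = mat 1"
proof -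
  have "\<exists>A'. A ** A' = mat 1 \<and> A' ** A = mat 1" using assms by (simp add: invertible_def)
  then have "A ** matrix_inv A = mat 1 \<and> matrix_inv A ** A = mat 1"
    unfolding matrix_inv_def by (rule someI_ex)
  then show "A ** matrix_inv A = mat 1" "matrix_inv A ** A = mat 1" by auto
qed

lemma pos_def_matrix_invertible: "pos_def_matrix (L :: real^'n^'n) \<Longrightarrow> invertible L"
  unfolding pos_def_matrix_def
  by (metis inner_zero_right invertible_left_inverse less_irrefl matrix_left_invertible_ker)

lemma pos_def_matrix_inv_cancel:
  fixes L :: "real^'n^'n"
  assumes "pos_def_matrix L"
  shows "L *v (matrix_inv L *v x) = x" and "matrix_inv L *v (L *v x) = x"
  using invertible_matrix_inv[OF pos_def_matrix_invertible[OF assms]]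
  by (simp_all add: matrix_vector_mul_assoc)

lemma pos_def_matrix_inv_eigenvector:
  fixes L :: "real^'n^'n"
  assumes "pos_def_matrix L" and "L *v b = c *\<^sub>R b" and "c \<noteq> 0"
  shows "matrix_inv L *v b = (1 / c) *\<^sub>R b"
proof -
  have "b = c *\<^sub>R (matrix_inv L *v b)"
    using pos_def_matrix_inv_cancel(2)[OF assms(1), of b] by (simp add: assms(2) matrix_vector_mult_scaleR)
  then have "(1 / c) *\<^sub>R b = (1 / c) *\<^sub>R (c *\<^sub>R (matrix_inv L *v b))" by (rule arg_cong)
  then show ?thesis using assms(3) by simp
qed

lemma pos_def_matrix_eigenbasis:
  fixes L :: "real^'n^'n"
  assumes L: "pos_def_matrix L"
  obtains Q :: "real^'n^'n" and lam :: "'n \<Rightarrow> real"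
  where "orthogonal_matrix Q" and "\<And>j. L *v column j Q = lam j *\<^sub>R column j Q"
    and "\<And>j. lam j > 0" and "det L = (\<Prod>j\<in>UNIV. lam j)"
proof -
  obtain Q lam where Q: "orthogonal_matrix Q" and eig: "\<And>j. L *v column j Q = lam j *\<^sub>R column j Q"
    using symmetric_matrix_orthogonal_eigenvectors L unfolding pos_def_matrix_def by blast
  have "lam j > 0" for j
  proof -
    have "norm (column j Q) = 1" using Q by (simp add: orthogonal_matrix_orthonormal_columns)
    then have "column j Q \<noteq> 0" by auto
    then have "0 < column j Q \<bullet> (L *v column j Q)" using L by (simp add: pos_def_matrix_def)
    also have "\<dots> = lam j" using \<open>norm (column j Q) = 1\<close> by (simp add: eig norm_eq_1)
    finally show ?thesis .
  qed
  then show ?thesis using that Q eig det_eq_prod_eigenvalues[OF Q eig] by blast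
qed

lemma pos_def_matrix_det_pos: "pos_def_matrix L \<Longrightarrow> det L > 0"
  by (metis pos_def_matrix_eigenbasis prod_pos)

text \<open>With \<open>y = L\<^sub>1\<inverse> x\<close>, adding \<open>0 \<le> (y - L\<^sub>2\<inverse> x) \<bullet> L\<^sub>2 (y - L\<^sub>2\<inverse> x)\<close> and
  \<open>0 \<le> y \<bullet> (L\<^sub>1 - L\<^sub>2) y\<close> gives \<open>x \<bullet> L\<^sub>1\<inverse> x \<le> x \<bullet> L\<^sub>2\<inverse> x\<close>.\<close>
lemma pos_semidef_matrix_inv_diff:
  fixes L1 L2 :: "real^'n^'n"
  assumes L1: "pos_def_matrix L1" and L2: "pos_def_matrix L2" and le: "pos_semidef_matrix (L1 - L2)"
  shows "pos_semidef_matrix (matrix_inv L2 - matrix_inv L1)"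
  unfolding pos_semidef_matrix_def
proof
  fix x :: "real^'n"
  define M2 where "M2 = matrix_inv L2"
  define y where "y = matrix_inv L1 *v x"
  have L2M2: "L2 *v (M2 *v x) = x" using pos_def_matrix_inv_cancel(1)[OF L2] by (simp add: M2_def)
  have L1y: "L1 *v y = x" using pos_def_matrix_inv_cancel(1)[OF L1] by (simp add: y_def)
  have "(M2 *v x) \<bullet> (L2 *v y) = y \<bullet> x"
    using inner_matrix_vector_mult_symmetric[of L2 "M2 *v x" y] L2 L2M2
    by (simp add: pos_def_matrix_def inner_commute)
  then have "(y - M2 *v x) \<bullet> (L2 *v (y - M2 *v x)) = y \<bullet> (L2 *v y) - 2 * (y \<bullet> x) + x \<bullet> (M2 *v x)"
    by (simp add: matrix_vector_mult_diff_distrib inner_diff_left inner_diff_right L2M2 inner_commute[of "M2 *v x" x])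
  moreover have "0 \<le> (y - M2 *v x) \<bullet> (L2 *v (y - M2 *v x))"
    using pos_def_imp_pos_semidef_matrix[OF L2] by (simp add: pos_semidef_matrix_def)
  moreover have "y \<bullet> ((L1 - L2) *v y) = y \<bullet> x - y \<bullet> (L2 *v y)"
    by (simp add: matrix_vector_mult_diff_rdistrib inner_diff_right L1y)
  moreover have "0 \<le> y \<bullet> ((L1 - L2) *v y)" using le by (simp add: pos_semidef_matrix_def)
  moreover have "y \<bullet> x = x \<bullet> (matrix_inv L1 *v x)" by (simp add: y_def inner_commute)
  ultimately show "0 \<le> x \<bullet> ((matrix_inv L2 - matrix_inv L1) *v x)"
    by (simp add: M2_def matrix_vector_mult_diff_rdistrib inner_diff_right)
qed

text \<open>For a quadratic form \<open>q\<close> and \<open>u + v = 1\<close>,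
  \<open>q(u a + v b) = u q(a) + v q(b) - u v q(a - b)\<close>, so convexity only needs \<open>q \<ge> 0\<close>.\<close>
lemma convex_quadratic_sublevel:
  fixes N :: "real^'n^'n"
  assumes N: "pos_semidef_matrix N"
  shows "convex {x. (x - mu) \<bullet> (N *v (x - mu)) \<le> c}"
  unfolding convex_def
proof clarsimp
  fix x y :: "real^'n" and u v :: real
  assume x: "(x - mu) \<bullet> (N *v (x - mu)) \<le> c" and y: "(y - mu) \<bullet> (N *v (y - mu)) \<le> c"
    and u: "0 \<le> u" and v: "0 \<le> v" and uv: "u + v = 1"
  define a where "a = x - mu"
  define b where "b = y - mu"
  have shift: "u *\<^sub>R x + v *\<^sub>R y - mu = u *\<^sub>R a + v *\<^sub>R b"
    using uv by (simp add: a_def b_def algebra_simps) (metis add_diff_cancel_left' scaleR_add_left scaleR_one)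
  have "(u *\<^sub>R a + v *\<^sub>R b) \<bullet> (N *v (u *\<^sub>R a + v *\<^sub>R b)) =
      u * (a \<bullet> (N *v a)) + v * (b \<bullet> (N *v b)) - u * v * ((a - b) \<bullet> (N *v (a - b)))"
  proof -
    have v': "v = 1 - u" using uv by simp
    show ?thesis unfolding v'
      by (simp add: matrix_vector_right_distrib matrix_vector_mult_diff_distrib matrix_vector_mult_scaleR
          inner_add_left inner_add_right inner_diff_left inner_diff_right algebra_simps power2_eq_square)
  qed
  also have "\<dots> \<le> u * c + v * c"
  proof -
    have "0 \<le> u * v * ((a - b) \<bullet> (N *v (a - b)))" using u v N by (simp add: pos_semidef_matrix_def)
    moreover have "u * (a \<bullet> (N *v a)) \<le> u * c" using x u by (simp add: a_def mult_left_mono)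
    moreover have "v * (b \<bullet> (N *v b)) \<le> v * c" using y v by (simp add: b_def mult_left_mono)
    ultimately show ?thesis by linarith
  qed
  also have "\<dots> = c" by (metis distrib_right mult_1 uv)
  finally show "(u *\<^sub>R x + v *\<^sub>R y - mu) \<bullet> (N *v (u *\<^sub>R x + v *\<^sub>R y - mu)) \<le> c"
    by (simp add: shift)
qed

section \<open>Orthogonal maps preserve Lebesgue measure\<close>

lemma matrix_vector_mult_borel_measurable [measurable]:
  "(\<lambda>x. (A :: real^'n^'m) *v x) \<in> borel_measurable borel"
  by (intro borel_measurable_continuous_onI linear_continuous_on)
    (simp add: linear_linear[symmetric] matrix_vector_mul_linear)

lemma emeasure_lborel_box_cart:
  fixes l u :: "real^'n"
  assumes "\<And>i. l $ i \<le> u $ i"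
  shows "emeasure lborel (box l u) = ennreal (\<Prod>i\<in>UNIV. u $ i - l $ i)"
proof -
  have ne: "cbox l u \<noteq> {}" using assms by (auto simp: cbox_def Basis_vec_def cart_eq_inner_axis)
  have "emeasure lborel (box l u) = emeasure lborel (cbox l u)"
    using assms by (simp add: emeasure_lborel_box_eq emeasure_lborel_cbox_eq)
  also have "\<dots> = ennreal (measure lborel (cbox l u))"
    using ne by (simp add: emeasure_lborel_cbox_eq content_cbox_if inner_diff_left box_ne_empty(1)[symmetric])
  finally show ?thesis using content_cbox_cart[OF ne] by simp
qed

lemma vec_reindex_borel_measurable [measurable]:
  "(\<lambda>v::real^'n. (\<chi> i. v $ \<sigma> i) :: real^'m) \<in> borel_measurable borel"
  by (intro borel_measurable_continuous_onI continuous_intros)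

lemma lborel_distr_vec_reindex:
  fixes \<sigma> :: "'m::finite \<Rightarrow> 'n::finite"
  assumes \<sigma>: "bij \<sigma>"
  shows "distr lborel borel (\<lambda>v::real^'n. \<chi> i. v $ \<sigma> i) = (lborel :: (real^'m) measure)"
proof (rule lborel_eqI[symmetric])
  let ?R = "\<lambda>v::real^'n. (\<chi> i. v $ \<sigma> i) :: real^'m"
  show "sets (distr lborel borel ?R) = sets borel" by simp
  fix l u :: "real^'m" assume lu: "\<And>b. b \<in> Basis \<Longrightarrow> l \<bullet> b \<le> u \<bullet> b"
  have lu': "\<And>i. l $ i \<le> u $ i" using lu[of "axis _ 1"] by (simp add: inner_axis)
  define l' :: "real^'n" where "l' = (\<chi> j. l $ inv \<sigma> j)"
  define u' :: "real^'n" where "u' = (\<chi> j. u $ inv \<sigma> j)"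
  have "?R -` box l u = box l' u'"
    using \<sigma> by (auto simp: mem_box_cart l'_def u'_def bij_inv_eq_iff) (metis bij_inv_eq_iff)+
  then have "emeasure (distr lborel borel ?R) (box l u) = emeasure lborel (box l' u')"
    by (simp add: emeasure_distr)
  also have "\<dots> = ennreal (\<Prod>j\<in>UNIV. u $ inv \<sigma> j - l $ inv \<sigma> j)"
    using emeasure_lborel_box_cart[of l' u'] by (simp add: l'_def u'_def lu')
  also have "(\<Prod>j\<in>UNIV. u $ inv \<sigma> j - l $ inv \<sigma> j) = (\<Prod>i\<in>UNIV. u $ i - l $ i)"
    using bij_imp_bij_inv[OF \<sigma>] by (rule prod.reindex_bij_betw)
  also have "ennreal \<dots> = emeasure lborel (box l u)"
    by (rule emeasure_lborel_box_cart[symmetric]) (simp add: lu')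
  finally show "emeasure (distr lborel borel ?R) (box l u) = (\<Prod>b\<in>Basis. (u - l) \<bullet> b)"
    using lu by simp
qed

lemma lborel_distr_orthogonal_matrix_wellorder:
  fixes Q :: "real^'k::{finite,wellorder}^'k::{finite,wellorder}"
  assumes Q: "orthogonal_matrix Q"
  shows "distr lborel borel ((*v) Q) = lborel"
proof (rule lborel_eqI[symmetric])
  show "sets (distr lborel borel ((*v) Q)) = sets borel" by simp
  fix l u :: "real^'k::{finite,wellorder}" assume lu: "\<And>b. b \<in> Basis \<Longrightarrow> l \<bullet> b \<le> u \<bullet> b"
  have QT: "transpose Q ** Q = mat 1" "Q ** transpose Q = mat 1"
    using Q by (auto simp: orthogonal_matrix_def)
  have pre: "(*v) Q -` box l u = (*v) (transpose Q) ` box l u"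
  proof safe
    fix x assume "Q *v x \<in> box l u"
    moreover have "x = transpose Q *v (Q *v x)" by (metis QT matrix_vector_mul_assoc matrix_vector_mul_lid)
    ultimately show "x \<in> (*v) (transpose Q) ` box l u" by blast
  next
    fix x assume "x \<in> box l u"
    moreover have "Q *v (transpose Q *v x) = x" by (metis QT matrix_vector_mul_assoc matrix_vector_mul_lid)
    ultimately show "transpose Q *v x \<in> (*v) Q -` box l u" by simp
  qed
  have ot: "orthogonal_transformation ((*v) (transpose Q))"
    using Q by (simp add: orthogonal_transformation_matrix orthogonal_matrix_def)
  have box: "box l u \<in> lmeasurable" by simp
  have "(*v) (transpose Q) ` box l u \<in> sets borel"
    by (metis pre matrix_vector_mult_borel_measurable measurable_sets_borel open_box borel_open)
  then have "emeasure (distr lborel borel ((*v) Q)) (box l u) = emeasure lebesgue ((*v) (transpose Q) ` box l u)"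
    by (simp add: emeasure_distr pre)
  also have "\<dots> = measure lebesgue (box l u)"
    using measurable_orthogonal_image[OF ot box] measure_orthogonal_image[OF ot box]
    by (simp add: emeasure_eq_measure2)
  also have "\<dots> = emeasure lborel (box l u)"
    by (simp add: emeasure_eq_measure2)
  finally show "emeasure (distr lborel borel ((*v) Q)) (box l u) = (\<Prod>b\<in>Basis. (u - l) \<bullet> b)"
    using lu by simp
qed

text \<open>The change of variables theorems of HOL-Analysis assume a well-ordered index type; an
  arbitrary finite index type is reduced to a well-ordered copy of it, ordered by \<open>to_nat\<close>.\<close>
typedef 'a well_ordered = "UNIV :: 'a set" by auto

instance well_ordered :: (finite) finite
proof
  show "finite (UNIV :: 'a well_ordered set)"
    by (metis finite_imageI finite_class.finite_UNIV type_definition.Abs_image[OF type_definition_well_ordered])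
qed

instantiation well_ordered :: (finite) linorder
begin
definition less_eq_well_ordered :: "'a well_ordered \<Rightarrow> 'a well_ordered \<Rightarrow> bool" where
  "less_eq_well_ordered x y \<longleftrightarrow> to_nat (Rep_well_ordered x) \<le> to_nat (Rep_well_ordered y)"
definition less_well_ordered :: "'a well_ordered \<Rightarrow> 'a well_ordered \<Rightarrow> bool" where
  "less_well_ordered x y \<longleftrightarrow> to_nat (Rep_well_ordered x) < to_nat (Rep_well_ordered y)"
instance
proof
  fix x y z :: "'a well_ordered"
  show "(x < y) = (x \<le> y \<and> \<not> y \<le> x)" by (auto simp: less_eq_well_ordered_def less_well_ordered_def)
  show "x \<le> x" by (simp add: less_eq_well_ordered_def)
  show "x \<le> y \<Longrightarrow> y \<le> z \<Longrightarrow> x \<le> z" by (simp add: less_eq_well_ordered_def)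
  show "x \<le> y \<Longrightarrow> y \<le> x \<Longrightarrow> x = y" by (simp add: less_eq_well_ordered_def Rep_well_ordered_inject)
  show "x \<le> y \<or> y \<le> x" by (auto simp: less_eq_well_ordered_def)
qed
end

instance well_ordered :: (finite) wellorder
proof
  fix P :: "'a well_ordered \<Rightarrow> bool" and a
  assume step: "\<And>x. (\<And>y. y < x \<Longrightarrow> P y) \<Longrightarrow> P x"
  have "\<And>x. to_nat (Rep_well_ordered x) = n \<Longrightarrow> P x" for n
  proof (induction n rule: less_induct)
    case (less n)
    show ?case by (rule step) (use less in \<open>auto simp: less_well_ordered_def\<close>)
  qed
  then show "P a" by blast
qed

lemma lborel_distr_orthogonal_matrix:
  fixes Q :: "real^'n::finite^'n"
  assumes Q: "orthogonal_matrix Q"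
  shows "distr lborel borel ((*v) Q) = lborel"
proof -
  define R :: "real^'n well_ordered \<Rightarrow> real^'n" where "R v = (\<chi> i. v $ Abs_well_ordered i)" for v
  define Q' :: "real^'n well_ordered^'n well_ordered"
    where "Q' = (\<chi> i j. Q $ Rep_well_ordered i $ Rep_well_ordered j)"
  have bij: "bij Abs_well_ordered"
    by (metis Abs_well_ordered_inverse Rep_well_ordered_inverse UNIV_I bij_betw_byWitness subset_UNIV)
  have R: "distr lborel borel R = lborel"
    unfolding R_def by (rule lborel_distr_vec_reindex[OF bij])
  have [measurable]: "R \<in> borel_measurable borel"
    unfolding R_def by measurable
  have reindex: "(\<Sum>j\<in>UNIV. f (Rep_well_ordered j)) = (\<Sum>j\<in>UNIV. f j)" for f :: "'n \<Rightarrow> real"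
    by (rule sum.reindex_bij_witness[where i=Abs_well_ordered and j=Rep_well_ordered])
      (simp_all add: Abs_well_ordered_inverse Rep_well_ordered_inverse)
  have "(transpose Q' ** Q') $ a $ b = (transpose Q ** Q) $ Rep_well_ordered a $ Rep_well_ordered b" for a b
    using reindex[of "\<lambda>k. Q $ k $ Rep_well_ordered a * Q $ k $ Rep_well_ordered b"]
    by (simp add: Q'_def matrix_matrix_mult_def transpose_def)
  then have Q': "orthogonal_matrix Q'"
    using Q by (simp add: orthogonal_matrix vec_eq_iff mat_def Rep_well_ordered_inject)
  have "(Q *v R v) $ i = (R (Q' *v v)) $ i" for v i
    using reindex[of "\<lambda>j. Q $ i $ j * v $ Abs_well_ordered j"]
    by (simp add: R_def Q'_def matrix_vector_mult_def Abs_well_ordered_inverse Rep_well_ordered_inverse)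
  then have comm: "(*v) Q \<circ> R = R \<circ> (*v) Q'" by (simp add: fun_eq_iff vec_eq_iff)
  have "distr lborel borel ((*v) Q) = distr lborel borel ((*v) Q \<circ> R)"
    by (subst (1) R[symmetric]) (simp add: distr_distr)
  also have "\<dots> = distr (distr lborel borel ((*v) Q')) borel R"
    by (simp add: comm distr_distr)
  also have "\<dots> = lborel"
    by (simp add: lborel_distr_orthogonal_matrix_wellorder[OF Q'] R)
  finally show ?thesis .
qed

section \<open>Gaussian densities\<close>

lemma orthogonal_matrix_column_inner:
  fixes Q :: "real^'n^'n"
  assumes "orthogonal_matrix Q"
  shows "column i Q \<bullet> column j Q = (if i = j then 1 else 0)"
  using arg_cong[where f="\<lambda>A. A $ i $ j", OF assms[unfolded orthogonal_matrix]]
  by (simp add: matrix_mult_transpose_dot_column mat_def)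

lemma matrix_vector_mult_sum: "(A :: real^'n^'m) *v (\<Sum>i\<in>I. f i) = (\<Sum>i\<in>I. A *v f i)"
  by (induction I rule: infinite_finite_induct) (simp_all add: matrix_vector_right_distrib)

lemma quadratic_form_orthogonal_eigenvectors:
  fixes M Q :: "real^'n^'n"
  assumes Q: "orthogonal_matrix Q" and eig: "\<And>j. M *v column j Q = c j *\<^sub>R column j Q"
  shows "(Q *v w) \<bullet> (M *v (Q *v w)) = (\<Sum>j\<in>UNIV. c j * (w $ j)\<^sup>2)"
proof -
  have Qw: "Q *v w = (\<Sum>j\<in>UNIV. w $ j *\<^sub>R column j Q)"
    by (simp add: matrix_mult_sum scalar_mult_eq_scaleR)
  have "M *v (Q *v w) = (\<Sum>j\<in>UNIV. (c j * w $ j) *\<^sub>R column j Q)"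
    unfolding Qw by (simp add: matrix_vector_mult_sum matrix_vector_mult_scaleR eig mult.commute)
  then show ?thesis
    by (simp add: Qw inner_sum_left inner_sum_right orthogonal_matrix_column_inner[OF Q]
        if_distrib[of "\<lambda>z. _ * z"] power2_eq_square mult_ac cong: if_cong)
qed

lemma real_sqrt_prod: "sqrt (\<Prod>i\<in>A. f i) = (\<Prod>i\<in>A. sqrt (f i))"
  by (induction A rule: infinite_finite_induct) (simp_all add: real_sqrt_mult)

lemma nn_integral_exp_neg_square:
  fixes a :: real
  assumes "a > 0"
  shows "(\<integral>\<^sup>+t. ennreal (exp (- t\<^sup>2 / (2 * a))) \<partial>lborel) = ennreal (sqrt (2 * pi * a))"
proof -
  have "exp (- t\<^sup>2 / (2 * a)) = sqrt (2 * pi * a) * normal_density 0 (sqrt a) t" for t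
    using assms by (simp add: normal_density_def real_sqrt_mult)
  then have "(\<integral>\<^sup>+t. ennreal (exp (- t\<^sup>2 / (2 * a))) \<partial>lborel)
      = (\<integral>\<^sup>+t. ennreal (sqrt (2 * pi * a)) * ennreal (normal_density 0 (sqrt a) t) \<partial>lborel)"
    using assms by (intro nn_integral_cong) (simp add: ennreal_mult'[symmetric])
  also have "\<dots> = ennreal (sqrt (2 * pi * a)) * (\<integral>\<^sup>+t. ennreal (normal_density 0 (sqrt a) t) \<partial>lborel)"
    by (rule nn_integral_cmult) simp
  also have "(\<integral>\<^sup>+t. ennreal (normal_density 0 (sqrt a) t) \<partial>lborel)
      = ennreal (\<integral>t. normal_density 0 (sqrt a) t \<partial>lborel)"
    using assms by (intro nn_integral_eq_integral integrable_normal_density) auto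
  finally show ?thesis using assms by simp
qed

lemma Basis_cart_eq_range_axis: "(Basis :: (real^'n) set) = range (\<lambda>j. axis j 1)"
  by (auto simp: Basis_vec_def)

lemma inj_axis_one: "inj (\<lambda>j::'n::finite. axis j (1::real))"
  by (simp add: inj_def axis_eq_axis)

lemma nn_integral_gaussian_diagonal:
  fixes a :: "'n::finite \<Rightarrow> real"
  assumes a: "\<And>j. a j > 0"
  shows "(\<integral>\<^sup>+w. ennreal (exp (- (\<Sum>j\<in>UNIV. (w $ j)\<^sup>2 / a j) / 2)) \<partial>(lborel :: (real^'n) measure))
    = ennreal (sqrt ((2 * pi) ^ CARD('n) * (\<Prod>j\<in>UNIV. a j)))"
proof -
  let ?f = "\<lambda>b t. ennreal (exp (- t\<^sup>2 / (2 * a (axis_index b))))"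
  have "ennreal (exp (- (\<Sum>j\<in>UNIV. (w $ j)\<^sup>2 / a j) / 2)) = (\<Prod>b\<in>Basis. ?f b (w \<bullet> b))" for w :: "real^'n"
    by (simp add: Basis_cart_eq_range_axis prod.reindex[OF inj_axis_one] inner_axis
        prod_ennreal exp_sum[symmetric] sum_divide_distrib sum_negf mult.commute)
  then have "(\<integral>\<^sup>+w. ennreal (exp (- (\<Sum>j\<in>UNIV. (w $ j)\<^sup>2 / a j) / 2)) \<partial>(lborel :: (real^'n) measure))
      = (\<integral>\<^sup>+w. (\<Prod>b\<in>Basis. ?f b (w \<bullet> b)) \<partial>(lborel :: (real^'n) measure))"
    by simp
  also have "\<dots> = (\<Prod>b\<in>(Basis :: (real^'n) set). \<integral>\<^sup>+t. ?f b t \<partial>lborel)"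
    by (rule nn_integral_lborel_prod) auto
  also have "\<dots> = (\<Prod>j\<in>UNIV. ennreal (sqrt (2 * pi * a j)))"
    unfolding Basis_cart_eq_range_axis prod.reindex[OF inj_axis_one] o_def axis_index_axis
    using a by (simp only: nn_integral_exp_neg_square)
  also have "\<dots> = ennreal (\<Prod>j\<in>UNIV. sqrt (2 * pi * a j))"
    using a by (intro prod_ennreal) (simp add: less_imp_le)
  also have "\<dots> = ennreal (sqrt ((2 * pi) ^ CARD('n) * (\<Prod>j\<in>UNIV. a j)))"
    by (simp add: real_sqrt_prod[symmetric] prod.distrib)
  finally show ?thesis .
qed

lemma gaussian_density_pos: "pos_def_matrix L \<Longrightarrow> 0 < gaussian_density mu L x"
  unfolding gaussian_density_def using pos_def_matrix_det_pos[of L] by simp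

lemma gaussian_density_borel_measurable [measurable]: "gaussian_density mu L \<in> borel_measurable borel"
  unfolding gaussian_density_def by measurable

lemma nn_integral_gaussian_density:
  fixes L :: "real^'n^'n" and mu :: "real^'n"
  assumes L: "pos_def_matrix L"
  shows "(\<integral>\<^sup>+x. ennreal (gaussian_density mu L x) \<partial>lborel) = 1"
proof -
  obtain Q lam where Q: "orthogonal_matrix Q" and eig: "\<And>j. L *v column j Q = lam j *\<^sub>R column j Q"
    and lam: "\<And>j. lam j > 0" and det: "det L = (\<Prod>j\<in>UNIV. lam j)"
    using pos_def_matrix_eigenbasis[OF L] by blast
  define s where "s = sqrt ((2 * pi) ^ CARD('n) * det L)"
  define q where "q w = (\<Sum>j\<in>UNIV. (w $ j)\<^sup>2 / lam j)" for w :: "real^'n"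
  have s: "s > 0" using pos_def_matrix_det_pos[OF L] by (simp add: s_def)
  have inv_eig: "matrix_inv L *v column j Q = (1 / lam j) *\<^sub>R column j Q" for j
    using lam[of j] by (intro pos_def_matrix_inv_eigenvector[OF L eig]) simp
  have "(Q *v w) \<bullet> (matrix_inv L *v (Q *v w)) = q w" for w
    using quadratic_form_orthogonal_eigenvectors[OF Q inv_eig] by (simp add: q_def)
  then have density: "gaussian_density mu L (mu + Q *v w) = exp (- q w / 2) / s" for w
    by (simp add: gaussian_density_def s_def)
  let ?g = "\<lambda>x. ennreal (gaussian_density mu L x)"
  have "(\<integral>\<^sup>+x. ?g x \<partial>lborel) = (\<integral>\<^sup>+x. ?g x \<partial>distr lborel borel ((+) mu))"
    by (simp add: lborel_distr_plus)
  also have "\<dots> = (\<integral>\<^sup>+z. ?g (mu + z) \<partial>lborel)"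
    by (rule nn_integral_distr) auto
  also have "\<dots> = (\<integral>\<^sup>+z. ?g (mu + z) \<partial>distr lborel borel ((*v) Q))"
    by (simp add: lborel_distr_orthogonal_matrix[OF Q])
  also have "\<dots> = (\<integral>\<^sup>+w. ?g (mu + Q *v w) \<partial>lborel)"
    by (rule nn_integral_distr) auto
  also have "\<dots> = (\<integral>\<^sup>+w. ennreal (1 / s) * ennreal (exp (- q w / 2)) \<partial>lborel)"
    using s by (intro nn_integral_cong) (simp add: density ennreal_mult'[symmetric])
  also have "\<dots> = ennreal (1 / s) * (\<integral>\<^sup>+w. ennreal (exp (- q w / 2)) \<partial>lborel)"
    by (rule nn_integral_cmult) (simp add: q_def)
  also have "\<dots> = ennreal (1 / s) * ennreal s"
    unfolding q_def nn_integral_gaussian_diagonal[OF lam] by (simp add: s_def det)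
  also have "\<dots> = 1"
    using s by (simp add: ennreal_mult'[symmetric])
  finally show ?thesis .
qed

lemma
  assumes "pos_def_matrix L"
  shows integrable_gaussian_density: "integrable lebesgue (gaussian_density mu L)"
    and integral_gaussian_density: "integral\<^sup>L lebesgue (gaussian_density mu L) = 1"
proof -
  have meas: "gaussian_density mu L \<in> borel_measurable lebesgue"
    by (rule measurable_completion) simp
  have nonneg: "0 \<le> gaussian_density mu L x" for x
    using gaussian_density_pos[OF assms] by (rule less_imp_le)
  have nn: "(\<integral>\<^sup>+x. ennreal (gaussian_density mu L x) \<partial>lebesgue) = 1"
    by (simp add: nn_integral_completion nn_integral_gaussian_density[OF assms])
  show int: "integrable lebesgue (gaussian_density mu L)"
    using nn by (intro integrableI_nn_integral_finite[OF meas]) (auto simp: nonneg)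
  have "ennreal (integral\<^sup>L lebesgue (gaussian_density mu L)) = 1"
    using nn by (subst nn_integral_eq_integral[OF int, symmetric]) (auto simp: nonneg)
  then show "integral\<^sup>L lebesgue (gaussian_density mu L) = 1"
    using integral_nonneg_AE[of "gaussian_density mu L" lebesgue] nonneg
    by (metis AE_I2 ennreal_eq_1)
qed

lemma convex_gaussian_density_le:
  fixes L1 L2 :: "real^'n^'n"
  assumes L1: "pos_def_matrix L1" and L2: "pos_def_matrix L2" and gt: "loewner_gt L1 L2"
  shows "convex {x. gaussian_density mu L1 x \<le> gaussian_density mu L2 x}"
proof -
  define s1 where "s1 = sqrt ((2 * pi) ^ CARD('n) * det L1)"
  define s2 where "s2 = sqrt ((2 * pi) ^ CARD('n) * det L2)"
  define N where "N = matrix_inv L2 - matrix_inv L1"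
  have "ln (gaussian_density mu L x) = - ((x - mu) \<bullet> (matrix_inv L *v (x - mu))) / 2
      - ln (sqrt ((2 * pi) ^ CARD('n) * det L))" if "pos_def_matrix L" for L x
    using pos_def_matrix_det_pos[OF that] by (simp add: gaussian_density_def ln_div)
  then have "gaussian_density mu L1 x \<le> gaussian_density mu L2 x \<longleftrightarrow>
      (x - mu) \<bullet> (N *v (x - mu)) \<le> 2 * (ln s1 - ln s2)" for x
    using ln_le_cancel_iff[OF gaussian_density_pos[OF L1] gaussian_density_pos[OF L2], of mu x mu x]
    by (simp add: L1 L2 N_def s1_def s2_def matrix_vector_mult_diff_rdistrib inner_diff_right) linarith
  moreover have "pos_semidef_matrix N"
    unfolding N_def using pos_semidef_matrix_inv_diff[OF L1 L2] gt
    by (simp add: loewner_gt_def pos_def_imp_pos_semidef_matrix)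
  ultimately show ?thesis
    using convex_quadratic_sublevel[of N mu "2 * (ln s1 - ln s2)"] by simp
qed

section \<open>Scheffe's argument\<close>

lemma measure_density_eq_integral:
  fixes f :: "'a \<Rightarrow> real"
  assumes f: "integrable M f" "\<And>x. 0 \<le> f x" and A: "A \<in> sets M"
  shows "measure (density M (\<lambda>x. ennreal (f x))) A = (\<integral>x. f x * indicator A x \<partial>M)"
proof -
  have int: "integrable M (\<lambda>x. f x * indicator A x)"
    using A f(1) by (rule integrable_real_mult_indicator)
  have "emeasure (density M (\<lambda>x. ennreal (f x))) A = (\<integral>\<^sup>+x. ennreal (f x * indicator A x) \<partial>M)"
    using A f(1) by (simp add: emeasure_density nn_integral_set_ennreal)
  also have "\<dots> = ennreal (\<integral>x. f x * indicator A x \<partial>M)"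
    using int f(2) by (intro nn_integral_eq_integral) auto
  finally show ?thesis
    using f(2) by (simp add: measure_def integral_nonneg)
qed

lemma abs_integral_indicator_le:
  fixes f :: "'a \<Rightarrow> real"
  assumes f: "integrable M f" and f0: "integral\<^sup>L M f = 0" and E: "E \<in> sets M" and A: "A \<in> sets M"
    and sgn: "\<And>x. x \<in> space M \<Longrightarrow> x \<in> E \<longleftrightarrow> f x \<le> 0"
  shows "\<bar>\<integral>x. f x * indicator A x \<partial>M\<bar> \<le> - (\<integral>x. f x * indicator E x \<partial>M)"
proof -
  have iA: "integrable M (\<lambda>x. f x * indicator A x)" by (rule integrable_real_mult_indicator[OF A f])
  have iE: "integrable M (\<lambda>x. f x * indicator E x)" by (rule integrable_real_mult_indicator[OF E f])
  have "(\<integral>x. f x * indicator A x \<partial>M) \<le> (\<integral>x. f x - f x * indicator E x \<partial>M)"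
    using sgn by (intro integral_mono iA Bochner_Integration.integrable_diff f iE)
      (auto split: split_indicator)
  also have "\<dots> = - (\<integral>x. f x * indicator E x \<partial>M)"
    using f iE f0 by simp
  finally have "(\<integral>x. f x * indicator A x \<partial>M) \<le> - (\<integral>x. f x * indicator E x \<partial>M)" .
  moreover have "(\<integral>x. f x * indicator E x \<partial>M) \<le> (\<integral>x. f x * indicator A x \<partial>M)"
    using sgn by (intro integral_mono iE iA) (auto split: split_indicator)
  ultimately show ?thesis by linarith
qed

lemma convex_imp_sets_lebesgue:
  fixes C :: "'a::euclidean_space set"
  assumes "convex C"
  shows "C \<in> sets lebesgue"
proof -
  have "negligible (C - interior C)"
    using negligible_convex_frontier[OF assms]
    by (rule negligible_subset) (use closure_subset in \<open>auto simp: frontier_def\<close>)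
  then have "C - interior C \<in> sets lebesgue"
    by (simp add: negligible_iff_null_sets null_setsD2)
  moreover have "C = interior C \<union> (C - interior C)" using interior_subset by blast
  ultimately show ?thesis by (metis sets.Un borel_open sets_completionI_sets sets_lborel open_interior)
qed

lemma convex_dist_eq_tv_dist_density:
  fixes f g :: "'a::euclidean_space \<Rightarrow> real"
  assumes f: "integrable lebesgue f" "\<And>x. 0 \<le> f x" and g: "integrable lebesgue g" "\<And>x. 0 \<le> g x"
    and same_mass: "integral\<^sup>L lebesgue f = integral\<^sup>L lebesgue g"
    and convex: "convex {x. f x \<le> g x}"
  defines "P \<equiv> density lebesgue (\<lambda>x. ennreal (f x))" and "Q \<equiv> density lebesgue (\<lambda>x. ennreal (g x))"
  shows "convex_dist P Q = tv_dist P Q"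
proof -
  define E where "E = {x. f x \<le> g x}"
  define T where "T = - (\<integral>x. (f x - g x) * indicator E x \<partial>lebesgue)"
  have E: "E \<in> sets lebesgue" unfolding E_def using convex by (rule convex_imp_sets_lebesgue)
  have diff: "measure P A - measure Q A = (\<integral>x. (f x - g x) * indicator A x \<partial>lebesgue)"
    if A: "A \<in> sets lebesgue" for A
    using measure_density_eq_integral[OF f A] measure_density_eq_integral[OF g A]
      integrable_real_mult_indicator[OF A f(1)] integrable_real_mult_indicator[OF A g(1)]
    by (simp add: P_def Q_def left_diff_distrib)
  have bound: "\<bar>measure P A - measure Q A\<bar> \<le> T" if A: "A \<in> sets lebesgue" for A
    unfolding diff[OF A] T_def
    using f(1) g(1) same_mass by (intro abs_integral_indicator_le E A) (auto simp: E_def)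
  have attained: "T \<le> \<bar>measure P E - measure Q E\<bar>"
    unfolding diff[OF E] T_def by simp
  have sets_P: "sets P = sets lebesgue" by (simp add: P_def)
  have convex_sets: "{C. convex C} \<subseteq> sets P" using convex_imp_sets_lebesgue by (auto simp: sets_P)
  have bdd: "bdd_above ((\<lambda>A. \<bar>measure P A - measure Q A\<bar>) ` sets P)"
    using bound by (auto simp: sets_P bdd_above_def)
  then have bdd_convex: "bdd_above ((\<lambda>A. \<bar>measure P A - measure Q A\<bar>) ` {C. convex C})"
    using convex_sets by (meson bdd_above_mono image_mono)
  have "convex_dist P Q \<le> tv_dist P Q"
    unfolding convex_dist_def tv_dist_def
    by (rule cSUP_subset_mono[OF _ bdd convex_sets]) (auto intro: exI[of _ "{}"])
  moreover have "tv_dist P Q \<le> T"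
    unfolding tv_dist_def by (rule cSUP_least) (auto simp: sets_P intro: bound)
  moreover have "T \<le> convex_dist P Q"
    unfolding convex_dist_def using convex
    by (intro cSUP_upper2[OF bdd_convex _ attained]) (simp add: E_def)
  ultimately show ?thesis by linarith
qed

theorem mainTheorem18:
  fixes L1 L2 :: "real^'n^'n" and mu :: "real^'n"
  assumes "pos_def_matrix L1" and "pos_def_matrix L2" and "loewner_gt L1 L2"
  shows "convex_dist (gaussian mu L1) (gaussian mu L2) = tv_dist (gaussian mu L1) (gaussian mu L2)"
proof -
  have nonneg: "0 \<le> gaussian_density mu L x" if "pos_def_matrix L" for L x
    using gaussian_density_pos[OF that] by (rule less_imp_le)
  show ?thesis
    unfolding gaussian_def
    by (rule convex_dist_eq_tv_dist_density)
      (simp_all add: assms nonneg integrable_gaussian_density integral_gaussian_density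
        convex_gaussian_density_le)
qed

end
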